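(* There is an absolute constant $c>0$ such that the following holds. Let $\epsilon\in(0,1)$ and let $A\in\mathbb{R}^{n\times n}$ be symmetric PSD with $\max_{i,j}|A_{ij}|\le1$ and largest eigenvalue $\lambda_1$. Include each index $i\in[n]$ independently with probability $p=\min(1,\frac{c}{\epsilon n})$ and let $T$ be the set of included indices. Then with probability at least $2/3$, either $\lambda_1 < \epsilon n$, or there exists $x \in \mathrm{span}\{e_i : i\in T\}$ with $x^TAx>0$ and $$\frac{x^TA^2x}{x^TAx}\ge \lambda_1-\epsilon n.$$ *)

theory Defs
  imports Complex_Main
begin

text \<open>Real n x n matrices are represented as functions nat => nat => real,
  only the entries with indices < n being relevant; vectors in R^n as nat => real.\<close>

definition mat_vec :: "nat \<Rightarrow> (nat \<Rightarrow> nat \<Rightarrow> real) \<Rightarrow> (nat \<Rightarrow> real) \<Rightarrow> nat \<Rightarrow> real" where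
  "mat_vec n A x i = (\<Sum>j<n. A i j * x j)"

definition mat_mul :: "nat \<Rightarrow> (nat \<Rightarrow> nat \<Rightarrow> real) \<Rightarrow> (nat \<Rightarrow> nat \<Rightarrow> real) \<Rightarrow> nat \<Rightarrow> nat \<Rightarrow> real" where
  "mat_mul n A B i j = (\<Sum>k<n. A i k * B k j)"

definition quad_form :: "nat \<Rightarrow> (nat \<Rightarrow> nat \<Rightarrow> real) \<Rightarrow> (nat \<Rightarrow> real) \<Rightarrow> real" where
  "quad_form n A x = (\<Sum>i<n. x i * mat_vec n A x i)"

definition symmetric_mat :: "nat \<Rightarrow> (nat \<Rightarrow> nat \<Rightarrow> real) \<Rightarrow> bool" where
  "symmetric_mat n A \<longleftrightarrow> (\<forall>i<n. \<forall>j<n. A i j = A j i)"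

definition psd_mat :: "nat \<Rightarrow> (nat \<Rightarrow> nat \<Rightarrow> real) \<Rightarrow> bool" where
  "psd_mat n A \<longleftrightarrow> symmetric_mat n A \<and> (\<forall>x. quad_form n A x \<ge> 0)"

definition is_eigenvalue :: "nat \<Rightarrow> (nat \<Rightarrow> nat \<Rightarrow> real) \<Rightarrow> real \<Rightarrow> bool" where
  "is_eigenvalue n A l \<longleftrightarrow> (\<exists>v. (\<exists>i<n. v i \<noteq> 0) \<and> (\<forall>i<n. mat_vec n A v i = l * v i))"

definition lambda_max :: "nat \<Rightarrow> (nat \<Rightarrow> nat \<Rightarrow> real) \<Rightarrow> real" where
  "lambda_max n A = Max {l. is_eigenvalue n A l}"

text \<open>Probability of an event about the random set T \<subseteq> {0..<n}, where each index is
  included independently with probability p.\<close>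
definition subset_prob :: "nat \<Rightarrow> real \<Rightarrow> (nat set \<Rightarrow> bool) \<Rightarrow> real" where
  "subset_prob n p E = (\<Sum>T\<in>{T. T \<subseteq> {..<n} \<and> E T}. p ^ card T * (1 - p) ^ (n - card T))"

end

theory Submission
  imports Defs "Jordan_Normal_Form.Char_Poly"
begin

text \<open>Let \<open>v\<close> be a unit eigenvector for \<open>l = \<lambda>\<^sub>1 \<ge> \<epsilon>n\<close> and take \<open>x\<close> to be \<open>v\<close> restricted
  to \<open>T\<close>. Writing \<open>x = p v + e\<close>, we get \<open>x\<^sup>TAx = p\<^sup>2 l + 2 p l \<langle>e, v\<rangle> + e\<^sup>TAe\<close> and, by
  Cauchy-Schwarz, \<open>|Ax|\<^sup>2 \<ge> l\<^sup>2 \<langle>x, v\<rangle>\<^sup>2 = l\<^sup>2 (p + \<langle>e, v\<rangle>)\<^sup>2\<close>; so the quotient is at least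
  \<open>l - \<epsilon>n\<close> once \<open>Z = \<epsilon>n \<langle>e, v\<rangle>\<^sup>2 + e\<^sup>TAe \<le> \<epsilon>n p\<^sup>2 / 16\<close>. Now \<open>Z\<close> is a quadratic form in the
  centred indicators of \<open>T\<close>, so its expectation is \<open>p (1 - p)\<close> times its trace, and the trace
  is at most \<open>2\<close> because positive semidefiniteness and \<open>A\<^sub>i\<^sub>i \<le> 1\<close> force \<open>v\<^sub>i\<^sup>2 \<le> 1 / l\<close>.
  Markov's inequality with \<open>p = min 1 (96 / \<epsilon>n)\<close> finishes the proof.\<close>

section \<open>Random subsets\<close>

definition subset_weight :: "nat \<Rightarrow> real \<Rightarrow> nat set \<Rightarrow> real" where
  "subset_weight n p T = p ^ card T * (1 - p) ^ (n - card T)"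

lemma subset_weight_nonneg: "0 \<le> p \<Longrightarrow> p \<le> 1 \<Longrightarrow> 0 \<le> subset_weight n p T"
  unfolding subset_weight_def by simp

lemma subset_prob_conv_sum:
  "subset_prob n p E = (\<Sum>T\<in>Pow {..<n}. if E T then subset_weight n p T else 0)"
proof -
  have "{T. T \<subseteq> {..<n} \<and> E T} = {T \<in> Pow {..<n}. E T}" by auto
  then show ?thesis
    unfolding subset_prob_def subset_weight_def[symmetric] by (simp flip: sum.inter_filter)
qed

lemma subset_weight_conv_prod:
  assumes "T \<subseteq> {..<n}"
  shows "subset_weight n p T = (\<Prod>i\<in>T. p) * (\<Prod>i\<in>{..<n} - T. 1 - p)"
proof -
  have "card ({..<n} - T) = n - card T"
    using assms by (simp add: card_Diff_subset finite_subset)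
  then show ?thesis unfolding subset_weight_def by simp
qed

text \<open>Independence of the events \<open>i \<in> T\<close>.\<close>

lemma sum_subset_weight_prod:
  "(\<Sum>T\<in>Pow {..<n}. subset_weight n p T * (\<Prod>i<n. h i (i \<in> T)))
     = (\<Prod>i<n. p * h i True + (1 - p) * h i False)"
proof -
  have "(\<Prod>i<n. p * h i True + (1 - p) * h i False)
      = (\<Sum>T\<in>Pow {..<n}. (\<Prod>i\<in>T. p * h i True) * (\<Prod>i\<in>{..<n} - T. (1 - p) * h i False))"
    by (simp add: prod_add)
  also have "\<dots> = (\<Sum>T\<in>Pow {..<n}. subset_weight n p T * (\<Prod>i<n. h i (i \<in> T)))"
  proof (rule sum.cong)
    fix T assume "T \<in> Pow {..<n}"
    then have T: "T \<subseteq> {..<n}" by auto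
    have "(\<Prod>i<n. h i (i \<in> T)) = (\<Prod>i\<in>T. h i (i \<in> T)) * (\<Prod>i\<in>{..<n} - T. h i (i \<in> T))"
      by (metis prod.subset_diff[OF T] finite_lessThan mult.commute)
    also have "\<dots> = (\<Prod>i\<in>T. h i True) * (\<Prod>i\<in>{..<n} - T. h i False)"
      by (auto intro!: arg_cong2[where f = "(*)"] prod.cong)
    finally show "(\<Prod>i\<in>T. p * h i True) * (\<Prod>i\<in>{..<n} - T. (1 - p) * h i False)
        = subset_weight n p T * (\<Prod>i<n. h i (i \<in> T))"
      unfolding subset_weight_conv_prod[OF T] prod.distrib by (simp add: mult_ac)
  qed simp
  finally show ?thesis ..
qed

lemma sum_subset_weight: "(\<Sum>T\<in>Pow {..<n}. subset_weight n p T) = 1"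
  using sum_subset_weight_prod[of n p "\<lambda>_ _. 1"] by simp

lemma subset_prob_eq_1:
  assumes "\<And>T. T \<subseteq> {..<n} \<Longrightarrow> E T"
  shows "subset_prob n p E = 1"
  using assms by (simp add: subset_prob_conv_sum sum_subset_weight)

lemma subset_prob_mono:
  assumes "0 \<le> p" "p \<le> 1" "\<And>T. T \<subseteq> {..<n} \<Longrightarrow> E T \<Longrightarrow> F T"
  shows "subset_prob n p E \<le> subset_prob n p F"
  unfolding subset_prob_conv_sum using assms subset_weight_nonneg[OF assms(1,2)]
  by (intro sum_mono) auto

lemma sum_subset_weight_centered_indicators:
  assumes "i < n" "j < n"
  shows "(\<Sum>T\<in>Pow {..<n}. subset_weight n p T * ((of_bool (i \<in> T) - p) * (of_bool (j \<in> T) - p)))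
           = (if i = j then p * (1 - p) else 0)"
proof -
  define h where "h k b = (if k = i then of_bool b - p else 1) * (if k = j then of_bool b - p else 1)"
    for k and b :: bool
  have "(\<Prod>k<n. h k (k \<in> T)) = (of_bool (i \<in> T) - p) * (of_bool (j \<in> T) - p)" for T
    unfolding h_def prod.distrib using assms by (simp add: prod.delta)
  then have "(\<Sum>T\<in>Pow {..<n}. subset_weight n p T * ((of_bool (i \<in> T) - p) * (of_bool (j \<in> T) - p)))
      = (\<Prod>k<n. p * h k True + (1 - p) * h k False)"
    using sum_subset_weight_prod[of n p h] by simp
  also have "\<dots> = (if i = j then p * (1 - p) else 0)"
  proof (cases "i = j")
    case True
    have "(\<Prod>k<n. p * h k True + (1 - p) * h k False) = (\<Prod>k<n. if k = i then p * (1 - p) else 1)"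
      by (rule prod.cong) (auto simp: h_def True algebra_simps power2_eq_square)
    then show ?thesis using True assms by (simp add: prod.delta)
  next
    case False
    have "p * h i True + (1 - p) * h i False = 0"
      using False by (simp add: h_def algebra_simps)
    then show ?thesis using False assms by (auto simp: prod_zero_iff)
  qed
  finally show ?thesis .
qed

lemma sum_subset_weight_centered_quadratic:
  "(\<Sum>T\<in>Pow {..<n}. subset_weight n p T *
      (\<Sum>i<n. \<Sum>j<n. (of_bool (i \<in> T) - p) * (of_bool (j \<in> T) - p) * M i j))
     = p * (1 - p) * (\<Sum>i<n. M i i)"
proof -
  have "(\<Sum>T\<in>Pow {..<n}. subset_weight n p T *
      (\<Sum>i<n. \<Sum>j<n. (of_bool (i \<in> T) - p) * (of_bool (j \<in> T) - p) * M i j))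
      = (\<Sum>i<n. \<Sum>j<n. (\<Sum>T\<in>Pow {..<n}. subset_weight n p T *
           ((of_bool (i \<in> T) - p) * (of_bool (j \<in> T) - p))) * M i j)"
    by (simp add: sum_distrib_left sum_distrib_right sum.swap[of _ "Pow {..<n}"] mult.assoc)
  also have "\<dots> = (\<Sum>i<n. \<Sum>j<n. if j = i then p * (1 - p) * M i j else 0)"
    by (intro sum.cong refl) (simp add: sum_subset_weight_centered_indicators)
  also have "\<dots> = p * (1 - p) * (\<Sum>i<n. M i i)"
    by (simp add: sum_distrib_left)
  finally show ?thesis .
qed

lemma subset_prob_Markov:
  assumes p: "0 \<le> p" "p \<le> 1" and t: "t > 0"
    and Z_nonneg: "\<And>T. T \<subseteq> {..<n} \<Longrightarrow> 0 \<le> Z T"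
    and Z_small: "\<And>T. T \<subseteq> {..<n} \<Longrightarrow> Z T \<le> t \<Longrightarrow> E T"
  shows "1 - (\<Sum>T\<in>Pow {..<n}. subset_weight n p T * Z T) / t \<le> subset_prob n p E"
proof -
  have "1 - (\<Sum>T\<in>Pow {..<n}. subset_weight n p T * Z T) / t
      = (\<Sum>T\<in>Pow {..<n}. subset_weight n p T * (1 - Z T / t))"
    using sum_subset_weight[of n p] t
    by (simp add: algebra_simps sum_subtractf sum_divide_distrib)
  also have "\<dots> \<le> (\<Sum>T\<in>Pow {..<n}. if E T then subset_weight n p T else 0)"
  proof (rule sum_mono)
    fix T assume "T \<in> Pow {..<n}"
    then have T: "T \<subseteq> {..<n}" by auto
    have "E T \<or> 1 - Z T / t \<le> 0"
      using Z_small[OF T] t by (auto simp: field_simps)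
    moreover have "0 \<le> Z T / t" using Z_nonneg[OF T] t by simp
    ultimately show "subset_weight n p T * (1 - Z T / t) \<le> (if E T then subset_weight n p T else 0)"
      using subset_weight_nonneg[OF p, of n T]
      by (auto simp: mult_left_le mult_nonneg_nonpos)
  qed
  finally show ?thesis by (simp add: subset_prob_conv_sum)
qed

section \<open>Bilinear forms of symmetric matrices\<close>

definition bil_form :: "nat \<Rightarrow> (nat \<Rightarrow> nat \<Rightarrow> real) \<Rightarrow> (nat \<Rightarrow> real) \<Rightarrow> (nat \<Rightarrow> real) \<Rightarrow> real" where
  "bil_form n A x y = (\<Sum>i<n. x i * mat_vec n A y i)"

lemma quad_form_eq_bil_form: "quad_form n A x = bil_form n A x x"
  unfolding quad_form_def bil_form_def ..

lemma bil_form_expand: "bil_form n A x y = (\<Sum>i<n. \<Sum>j<n. x i * A i j * y j)"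
  unfolding bil_form_def mat_vec_def by (simp add: sum_distrib_left mult.assoc)

lemma bil_form_commute:
  assumes "symmetric_mat n A"
  shows "bil_form n A x y = bil_form n A y x"
proof -
  have "bil_form n A x y = (\<Sum>j<n. \<Sum>i<n. x i * A i j * y j)"
    unfolding bil_form_expand by (rule sum.swap)
  also have "\<dots> = bil_form n A y x"
    unfolding bil_form_expand using assms unfolding symmetric_mat_def
    by (auto intro!: sum.cong simp: mult_ac)
  finally show ?thesis .
qed

lemma bil_form_scale_right: "bil_form n A x (\<lambda>i. c * y i) = c * bil_form n A x y"
  unfolding bil_form_expand by (simp add: sum_distrib_left mult_ac)

lemma quad_form_scale: "quad_form n A (\<lambda>i. c * x i) = c\<^sup>2 * quad_form n A x"
  unfolding quad_form_eq_bil_form bil_form_expand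
  by (simp add: sum_distrib_left power2_eq_square mult_ac)

lemma quad_form_add:
  assumes "symmetric_mat n A"
  shows "quad_form n A (\<lambda>i. x i + y i) = quad_form n A x + 2 * bil_form n A x y + quad_form n A y"
proof -
  have "quad_form n A (\<lambda>i. x i + y i) = bil_form n A x x + bil_form n A x y + bil_form n A y x + bil_form n A y y"
    unfolding quad_form_eq_bil_form bil_form_expand by (simp add: algebra_simps sum.distrib)
  then show ?thesis
    using bil_form_commute[OF assms, of y x] by (simp add: quad_form_eq_bil_form)
qed

lemma bil_form_eigenvector:
  assumes "\<forall>i<n. mat_vec n A v i = l * v i"
  shows "bil_form n A y v = l * (\<Sum>i<n. y i * v i)"
  unfolding bil_form_def using assms by (simp add: sum_distrib_left mult_ac)

lemma quad_form_unit_eigenvector: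
  assumes "(\<Sum>i<n. (v i)\<^sup>2) = 1" "\<forall>i<n. mat_vec n A v i = l * v i"
  shows "quad_form n A v = l"
  using bil_form_eigenvector[OF assms(2), of v] assms(1)
  by (simp add: quad_form_eq_bil_form power2_eq_square)

lemma bil_form_unit_left:
  assumes "i < n"
  shows "bil_form n A (\<lambda>k. of_bool (k = i)) y = mat_vec n A y i"
  unfolding bil_form_def using assms by simp

lemma quad_form_unit:
  assumes "i < n"
  shows "quad_form n A (\<lambda>k. of_bool (k = i)) = A i i"
  unfolding quad_form_eq_bil_form bil_form_unit_left[OF assms] mat_vec_def using assms by simp

lemma quad_form_mat_mul_self:
  assumes "symmetric_mat n A"
  shows "quad_form n (mat_mul n A A) x = (\<Sum>k<n. (mat_vec n A x k)\<^sup>2)"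
proof -
  have "(\<Sum>k<n. (mat_vec n A x k)\<^sup>2) = (\<Sum>k<n. \<Sum>i<n. \<Sum>j<n. (A k i * x i) * (A k j * x j))"
    unfolding mat_vec_def power2_eq_square sum_product ..
  also have "\<dots> = (\<Sum>i<n. \<Sum>k<n. \<Sum>j<n. (A k i * x i) * (A k j * x j))"
    by (rule sum.swap)
  also have "\<dots> = (\<Sum>i<n. \<Sum>j<n. \<Sum>k<n. (A k i * x i) * (A k j * x j))"
    by (intro sum.cong refl sum.swap)
  also have "\<dots> = (\<Sum>i<n. \<Sum>j<n. x i * (\<Sum>k<n. A i k * A k j) * x j)"
    using assms unfolding symmetric_mat_def
    by (intro sum.cong refl) (simp add: sum_distrib_left sum_distrib_right mult_ac)
  also have "\<dots> = quad_form n (mat_mul n A A) x"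
    unfolding quad_form_eq_bil_form bil_form_expand mat_mul_def ..
  finally show ?thesis ..
qed

lemma psd_bil_form_Cauchy_Schwarz:
  assumes psd: "psd_mat n A" and y: "quad_form n A y > 0"
  shows "(bil_form n A x y)\<^sup>2 \<le> quad_form n A x * quad_form n A y"
proof -
  have sym: "symmetric_mat n A" using psd unfolding psd_mat_def by simp
  define t where "t = - bil_form n A x y / quad_form n A y"
  have "0 \<le> quad_form n A (\<lambda>i. x i + t * y i)"
    using psd unfolding psd_mat_def by simp
  also have "\<dots> = quad_form n A x + 2 * t * bil_form n A x y + t\<^sup>2 * quad_form n A y"
    by (simp add: quad_form_add[OF sym] quad_form_scale bil_form_scale_right)
  also have "\<dots> = quad_form n A x - (bil_form n A x y)\<^sup>2 / quad_form n A y"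
    using y unfolding t_def by (simp add: field_simps power2_eq_square)
  finally show ?thesis using y by (simp add: field_simps)
qed

lemma Cauchy_Schwarz_sum_unit:
  fixes a b :: "nat \<Rightarrow> real"
  assumes "(\<Sum>i<n. (a i)\<^sup>2) = 1"
  shows "(\<Sum>i<n. a i * b i)\<^sup>2 \<le> (\<Sum>i<n. (b i)\<^sup>2)"
proof -
  define s where "s = (\<Sum>i<n. a i * b i)"
  have "0 \<le> (\<Sum>i<n. (b i - s * a i)\<^sup>2)" by (simp add: sum_nonneg)
  also have "\<dots> = (\<Sum>i<n. (b i)\<^sup>2) - 2 * s * (\<Sum>i<n. a i * b i) + s\<^sup>2 * (\<Sum>i<n. (a i)\<^sup>2)"
    by (simp add: power2_eq_square algebra_simps sum_distrib_left sum_subtractf sum.distrib)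
  finally show ?thesis using assms unfolding s_def by (simp add: power2_eq_square)
qed

section \<open>Real eigenvalues of symmetric matrices\<close>

definition complex_mat_of :: "nat \<Rightarrow> (nat \<Rightarrow> nat \<Rightarrow> real) \<Rightarrow> complex mat" where
  "complex_mat_of n A = mat n n (\<lambda>(i, j). complex_of_real (A i j))"

lemma complex_mat_of_carrier: "complex_mat_of n A \<in> carrier_mat n n"
  unfolding complex_mat_of_def by simp

lemma mult_mat_vec_complex_mat_of:
  "i < n \<Longrightarrow> dim_vec w = n \<Longrightarrow>
     (complex_mat_of n A *\<^sub>v w) $ i = (\<Sum>j<n. complex_of_real (A i j) * w $ j)"
  unfolding complex_mat_of_def by (simp add: scalar_prod_def lessThan_atLeast0)

lemma eigenvalue_complex_mat_of:
  assumes "is_eigenvalue n A l"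
  shows "eigenvalue (complex_mat_of n A) (complex_of_real l)"
proof -
  obtain v where v: "\<exists>i<n. v i \<noteq> 0" "\<forall>i<n. mat_vec n A v i = l * v i"
    using assms unfolding is_eigenvalue_def by blast
  define w where "w = vec n (\<lambda>i. complex_of_real (v i))"
  have "complex_mat_of n A *\<^sub>v w = complex_of_real l \<cdot>\<^sub>v w"
  proof (rule eq_vecI)
    fix i assume "i < dim_vec (complex_of_real l \<cdot>\<^sub>v w)"
    then have i: "i < n" by (simp add: w_def)
    have "(complex_mat_of n A *\<^sub>v w) $ i = complex_of_real (mat_vec n A v i)"
      using i by (simp add: mult_mat_vec_complex_mat_of w_def mat_vec_def)
    then show "(complex_mat_of n A *\<^sub>v w) $ i = (complex_of_real l \<cdot>\<^sub>v w) $ i"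
      using v(2) i by (simp add: w_def)
  qed (simp add: complex_mat_of_def w_def)
  moreover have "w \<in> carrier_vec n" "w \<noteq> 0\<^sub>v n"
    using v(1) by (auto simp: w_def vec_eq_iff)
  ultimately show ?thesis
    unfolding eigenvalue_def eigenvector_def complex_mat_of_def by auto
qed

lemma finite_eigenvalues: "finite {l. is_eigenvalue n A l}"
proof -
  let ?p = "char_poly (complex_mat_of n A)"
  have "?p \<noteq> 0"
    using degree_monic_char_poly[OF complex_mat_of_carrier, of n A] by auto
  then have "finite (complex_of_real -` {z. poly ?p z = 0})"
    by (intro finite_vimageI[OF poly_roots_finite] inj_of_real)
  moreover have "{l. is_eigenvalue n A l} \<subseteq> complex_of_real -` {z. poly ?p z = 0}"
    using eigenvalue_complex_mat_of eigenvalue_root_char_poly[OF complex_mat_of_carrier] by auto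
  ultimately show ?thesis by (rule finite_subset[rotated])
qed

lemma complex_mat_of_has_eigenvalue:
  assumes "n \<ge> 1"
  shows "\<exists>a. eigenvalue (complex_mat_of n A) a"
proof -
  obtain as where as: "char_poly (complex_mat_of n A) = (\<Prod>a\<leftarrow>as. [:- a, 1:])" "length as = n"
    using char_poly_factorized[OF complex_mat_of_carrier] by blast
  then obtain a rest where "as = a # rest" using assms by (cases as) auto
  then have "poly (char_poly (complex_mat_of n A)) a = 0" using as(1) by simp
  then show ?thesis using eigenvalue_root_char_poly[OF complex_mat_of_carrier] by blast
qed

text \<open>If \<open>u + i z\<close> is an eigenvector for \<open>\<alpha> + i \<beta>\<close>, symmetry forces
  \<open>\<beta> (|u|\<^sup>2 + |z|\<^sup>2) = bil_form u z - bil_form z u = 0\<close>.\<close>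

lemma is_eigenvalue_of_complex_eigenpair:
  assumes sym: "symmetric_mat n A"
    and Au: "\<forall>i<n. mat_vec n A u i = \<alpha> * u i - \<beta> * z i"
    and Az: "\<forall>i<n. mat_vec n A z i = \<beta> * u i + \<alpha> * z i"
    and k: "k < n" "u k \<noteq> 0 \<or> z k \<noteq> 0"
  shows "is_eigenvalue n A \<alpha>"
proof -
  have "bil_form n A u z = (\<Sum>i<n. \<beta> * (u i)\<^sup>2 + \<alpha> * (u i * z i))"
    unfolding bil_form_def by (intro sum.cong refl) (simp add: Az power2_eq_square algebra_simps)
  moreover have "bil_form n A z u = (\<Sum>i<n. \<alpha> * (u i * z i) - \<beta> * (z i)\<^sup>2)"
    unfolding bil_form_def by (intro sum.cong refl) (simp add: Au power2_eq_square algebra_simps)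
  ultimately have "\<beta> * (\<Sum>i<n. (u i)\<^sup>2 + (z i)\<^sup>2) = 0"
    using bil_form_commute[OF sym, of u z]
    by (simp add: sum.distrib sum_subtractf sum_distrib_left algebra_simps)
  moreover have "(\<Sum>i<n. (u i)\<^sup>2 + (z i)\<^sup>2) > 0"
    using k by (intro sum_pos2[of _ k]) (auto simp: sum_power2_gt_zero_iff add_nonneg_nonneg)
  ultimately have "\<beta> = 0" by simp
  then show ?thesis
    using Au Az k unfolding is_eigenvalue_def by (cases "u k = 0") auto
qed

lemma symmetric_mat_has_eigenvalue:
  assumes n: "n \<ge> 1" and sym: "symmetric_mat n A"
  shows "\<exists>l. is_eigenvalue n A l"
proof -
  obtain a where "eigenvalue (complex_mat_of n A) a"
    using complex_mat_of_has_eigenvalue[OF n] by blast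
  then obtain w where w: "w \<in> carrier_vec n" "w \<noteq> 0\<^sub>v n" "complex_mat_of n A *\<^sub>v w = a \<cdot>\<^sub>v w"
    unfolding eigenvalue_def eigenvector_def complex_mat_of_def by auto
  have eq: "(\<Sum>j<n. complex_of_real (A i j) * w $ j) = a * w $ i" if "i < n" for i
    using arg_cong[OF w(3), of "\<lambda>v. v $ i"] that w(1)
    by (simp add: mult_mat_vec_complex_mat_of)
  obtain k where k: "k < n" "w $ k \<noteq> 0"
    using w(1,2) by (auto simp: vec_eq_iff)
  have "is_eigenvalue n A (Re a)"
  proof (rule is_eigenvalue_of_complex_eigenpair[OF sym, of "\<lambda>i. Re (w $ i)" _ "Im a" "\<lambda>i. Im (w $ i)" k])
    show "\<forall>i<n. mat_vec n A (\<lambda>i. Re (w $ i)) i = Re a * Re (w $ i) - Im a * Im (w $ i)"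
      using eq by (auto simp: mat_vec_def complex_eq_iff Re_sum)
    show "\<forall>i<n. mat_vec n A (\<lambda>i. Im (w $ i)) i = Im a * Re (w $ i) + Re a * Im (w $ i)"
      using eq by (auto simp: mat_vec_def complex_eq_iff Im_sum)
    show "k < n" "Re (w $ k) \<noteq> 0 \<or> Im (w $ k) \<noteq> 0"
      using k by (auto simp: complex_eq_iff)
  qed
  then show ?thesis ..
qed

lemma is_eigenvalue_lambda_max:
  assumes "n \<ge> 1" "symmetric_mat n A"
  shows "is_eigenvalue n A (lambda_max n A)"
  using Max_in[OF finite_eigenvalues] symmetric_mat_has_eigenvalue[OF assms]
  unfolding lambda_max_def by auto

lemma unit_eigenvector_exists:
  assumes "is_eigenvalue n A l"
  obtains v where "(\<Sum>i<n. (v i)\<^sup>2) = 1" "\<forall>i<n. mat_vec n A v i = l * v i"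
proof -
  obtain w where w: "\<exists>i<n. w i \<noteq> 0" "\<forall>i<n. mat_vec n A w i = l * w i"
    using assms unfolding is_eigenvalue_def by blast
  define N where "N = (\<Sum>i<n. (w i)\<^sup>2)"
  have "N > 0"
    using w(1) unfolding N_def by (auto intro: sum_pos2)
  then have "(\<Sum>i<n. (w i / sqrt N)\<^sup>2) = 1"
    by (simp add: power_divide N_def flip: sum_divide_distrib)
  moreover have "\<forall>i<n. mat_vec n A (\<lambda>i. w i / sqrt N) i = l * (w i / sqrt N)"
    using w(2) by (simp add: mat_vec_def flip: sum_divide_distrib)
  ultimately show ?thesis by (rule that)
qed

section \<open>Reweighting the top eigenvector\<close>

lemma quad_form_reweighted_eigenvector:
  assumes sym: "symmetric_mat n A"
    and v: "(\<Sum>i<n. (v i)\<^sup>2) = 1" "\<forall>i<n. mat_vec n A v i = l * v i"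
  shows "quad_form n A (\<lambda>i. b i * v i)
           = p\<^sup>2 * l + 2 * p * l * (\<Sum>i<n. (b i - p) * (v i)\<^sup>2) + quad_form n A (\<lambda>i. (b i - p) * v i)"
proof -
  let ?e = "\<lambda>i. (b i - p) * v i"
  have "bil_form n A (\<lambda>i. p * v i) ?e = p * l * (\<Sum>i<n. (b i - p) * (v i)\<^sup>2)"
    using bil_form_commute[OF sym, of "\<lambda>i. p * v i" ?e]
    by (simp add: bil_form_scale_right bil_form_eigenvector[OF v(2)] power2_eq_square mult_ac)
  moreover have "(\<lambda>i. b i * v i) = (\<lambda>i. p * v i + ?e i)"
    by (auto simp: algebra_simps)
  ultimately show ?thesis
    by (simp add: quad_form_add[OF sym] quad_form_scale quad_form_unit_eigenvector[OF v])
qed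

lemma eigenvector_inner_le_quad_form_mat_mul_self:
  assumes sym: "symmetric_mat n A"
    and v: "(\<Sum>i<n. (v i)\<^sup>2) = 1" "\<forall>i<n. mat_vec n A v i = l * v i"
  shows "(l * (\<Sum>i<n. x i * v i))\<^sup>2 \<le> quad_form n (mat_mul n A A) x"
proof -
  have "l * (\<Sum>i<n. x i * v i) = (\<Sum>i<n. v i * mat_vec n A x i)"
    using bil_form_eigenvector[OF v(2), of x] bil_form_commute[OF sym, of x v]
    by (simp add: bil_form_def)
  also have "\<dots>\<^sup>2 \<le> (\<Sum>i<n. (mat_vec n A x i)\<^sup>2)"
    by (rule Cauchy_Schwarz_sum_unit[OF v(1)])
  finally show ?thesis by (simp add: quad_form_mat_mul_self[OF sym])
qed

lemma unit_eigenvector_coord_bound: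
  assumes psd: "psd_mat n A" and diag: "\<forall>i<n. A i i \<le> 1"
    and v: "(\<Sum>i<n. (v i)\<^sup>2) = 1" "\<forall>i<n. mat_vec n A v i = l * v i"
    and l: "l > 0" and i: "i < n"
  shows "(v i)\<^sup>2 \<le> 1 / l"
proof -
  have "(bil_form n A (\<lambda>k. of_bool (k = i)) v)\<^sup>2 \<le> A i i * l"
    using psd_bil_form_Cauchy_Schwarz[OF psd, of v "\<lambda>k. of_bool (k = i)"] l
    by (simp add: quad_form_unit[OF i] quad_form_unit_eigenvector[OF v])
  also have "\<dots> \<le> l"
    using diag i l by simp
  finally have "l * (l * (v i)\<^sup>2) \<le> l * 1"
    using v(2) i by (simp add: bil_form_unit_left power2_eq_square mult_ac)
  then show ?thesis
    using l by (simp add: field_simps)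
qed

lemma perturbed_quotient_ineq:
  fixes l \<mu> p t q :: real
  assumes \<mu>: "0 < \<mu>" "\<mu> \<le> l" and p: "0 < p" and t: "\<bar>t\<bar> \<le> p / 4"
    and q: "0 \<le> q" "q \<le> \<mu> * p\<^sup>2 / 16"
  shows "0 < p\<^sup>2 * l + 2 * p * l * t + q"
    and "(l - \<mu>) * (p\<^sup>2 * l + 2 * p * l * t + q) \<le> (l * (t + p))\<^sup>2"
proof -
  have l: "0 < l" using \<mu> by simp
  have "p * l * (- p / 4) \<le> p * l * t" using t p l by (intro mult_left_mono) auto
  then have pt: "- (p\<^sup>2 * l / 4) \<le> p * l * t" by (simp add: power2_eq_square mult_ac)
  have "p\<^sup>2 * l > 0" using p l by simp
  then show "0 < p\<^sup>2 * l + 2 * p * l * t + q" using pt q by linarith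
  have "\<mu> * (p\<^sup>2 * l / 2) \<le> \<mu> * (p\<^sup>2 * l + 2 * (p * l * t))"
    by (intro mult_left_mono; use pt \<mu> in linarith)
  moreover have "(l - \<mu>) * q \<le> l * (\<mu> * p\<^sup>2 / 16)"
    using q \<mu> by (intro mult_mono) auto
  moreover have "l * (\<mu> * p\<^sup>2 / 16) = \<mu> * (p\<^sup>2 * l / 2) / 8" by simp
  moreover have "0 \<le> \<mu> * (p\<^sup>2 * l / 2)" using \<mu> l by simp
  moreover have "0 \<le> l\<^sup>2 * t\<^sup>2" by simp
  ultimately have "0 \<le> l\<^sup>2 * t\<^sup>2 + \<mu> * (p\<^sup>2 * l + 2 * (p * l * t)) - (l - \<mu>) * q"
    by linarith
  also have "\<dots> = (l * (t + p))\<^sup>2 - (l - \<mu>) * (p\<^sup>2 * l + 2 * p * l * t + q)"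
    by (simp add: power2_eq_square algebra_simps)
  finally show "(l - \<mu>) * (p\<^sup>2 * l + 2 * p * l * t + q) \<le> (l * (t + p))\<^sup>2" by simp
qed

lemma reweighted_eigenvector_quotient_ge:
  assumes psd: "psd_mat n A"
    and v: "(\<Sum>i<n. (v i)\<^sup>2) = 1" "\<forall>i<n. mat_vec n A v i = l * v i"
    and \<mu>: "0 < \<mu>" "\<mu> \<le> l" and p: "p > 0"
    and close: "\<mu> * (\<Sum>i<n. (b i - p) * (v i)\<^sup>2)\<^sup>2 + quad_form n A (\<lambda>i. (b i - p) * v i) \<le> \<mu> * p\<^sup>2 / 16"
  shows "quad_form n A (\<lambda>i. b i * v i) > 0"
    and "l - \<mu> \<le> quad_form n (mat_mul n A A) (\<lambda>i. b i * v i) / quad_form n A (\<lambda>i. b i * v i)"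
proof -
  have sym: "symmetric_mat n A" using psd unfolding psd_mat_def by simp
  define t where "t = (\<Sum>i<n. (b i - p) * (v i)\<^sup>2)"
  define q where "q = quad_form n A (\<lambda>i. (b i - p) * v i)"
  have q: "0 \<le> q" using psd unfolding q_def psd_mat_def by simp
  have "\<mu> * t\<^sup>2 \<le> \<mu> * (p / 4)\<^sup>2" using close q unfolding t_def q_def by (simp add: power_divide)
  then have "\<bar>t\<bar> \<le> \<bar>p / 4\<bar>" using \<mu> by (simp only: abs_le_square_iff mult_le_cancel_left_pos)
  then have t: "\<bar>t\<bar> \<le> p / 4" using p by simp
  have "0 \<le> \<mu> * t\<^sup>2" using \<mu> by simp
  then have q_small: "q \<le> \<mu> * p\<^sup>2 / 16" using close unfolding t_def q_def by linarith
  have Q: "quad_form n A (\<lambda>i. b i * v i) = p\<^sup>2 * l + 2 * p * l * t + q"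
    unfolding t_def q_def by (rule quad_form_reweighted_eigenvector[OF sym v])
  have "(\<Sum>i<n. b i * v i * v i) = t + p"
    using v(1) by (simp add: t_def algebra_simps power2_eq_square sum.distrib sum_subtractf
        flip: sum_distrib_left)
  then have "(l * (t + p))\<^sup>2 \<le> quad_form n (mat_mul n A A) (\<lambda>i. b i * v i)"
    using eigenvector_inner_le_quad_form_mat_mul_self[OF sym v, of "\<lambda>i. b i * v i"] by simp
  then show "quad_form n A (\<lambda>i. b i * v i) > 0"
    and "l - \<mu> \<le> quad_form n (mat_mul n A A) (\<lambda>i. b i * v i) / quad_form n A (\<lambda>i. b i * v i)"
    using perturbed_quotient_ineq[OF \<mu> p t q q_small] unfolding Q by (auto simp: pos_le_divide_eq)
qed

lemma unit_eigenvector_trace_bound: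
  assumes psd: "psd_mat n A" and diag: "\<forall>i<n. A i i \<le> 1"
    and v: "(\<Sum>i<n. (v i)\<^sup>2) = 1" "\<forall>i<n. mat_vec n A v i = l * v i"
    and \<mu>: "0 < \<mu>" "\<mu> \<le> l"
  shows "(\<Sum>i<n. \<mu> * (v i)\<^sup>2 * (v i)\<^sup>2 + A i i * (v i)\<^sup>2) \<le> 2"
proof -
  have "(\<Sum>i<n. \<mu> * (v i)\<^sup>2 * (v i)\<^sup>2 + A i i * (v i)\<^sup>2) \<le> (\<Sum>i<n. (v i)\<^sup>2 + (v i)\<^sup>2)"
  proof (intro sum_mono add_mono)
    fix i assume i: "i \<in> {..<n}"
    then have "(v i)\<^sup>2 \<le> 1 / l"
      using unit_eigenvector_coord_bound[OF psd diag v] \<mu> by auto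
    also have "\<dots> \<le> 1 / \<mu>" using \<mu> by (simp add: frac_le)
    finally show "\<mu> * (v i)\<^sup>2 * (v i)\<^sup>2 \<le> (v i)\<^sup>2"
      using \<mu> by (intro mult_left_le_one_le) (auto simp: field_simps)
    show "A i i * (v i)\<^sup>2 \<le> (v i)\<^sup>2"
      using diag i mult_right_mono[of "A i i" 1 "(v i)\<^sup>2"] by simp
  qed
  then show ?thesis using v(1) by (simp add: sum.distrib flip: sum_distrib_left)
qed

lemma centered_quadratic_split:
  "(\<Sum>i<n. \<Sum>j<n. c i * c j * (\<mu> * w i * w j + v i * A i j * v j))
     = \<mu> * (\<Sum>i<n. c i * w i)\<^sup>2 + quad_form n A (\<lambda>i. c i * v i)"
proof -
  have "(\<Sum>i<n. \<Sum>j<n. c i * c j * (\<mu> * w i * w j + v i * A i j * v j))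
      = (\<Sum>i<n. \<Sum>j<n. \<mu> * ((c i * w i) * (c j * w j)) + (c i * v i) * A i j * (c j * v j))"
    by (intro sum.cong refl) (simp add: algebra_simps)
  also have "\<dots> = \<mu> * (\<Sum>i<n. \<Sum>j<n. (c i * w i) * (c j * w j))
      + (\<Sum>i<n. \<Sum>j<n. (c i * v i) * A i j * (c j * v j))"
    by (simp add: sum.distrib sum_distrib_left)
  also have "\<dots> = \<mu> * (\<Sum>i<n. c i * w i)\<^sup>2 + quad_form n A (\<lambda>i. c i * v i)"
    unfolding power2_eq_square sum_product quad_form_eq_bil_form bil_form_expand ..
  finally show ?thesis .
qed

lemma subset_prob_restricted_eigenvector:
  assumes psd: "psd_mat n A" and diag: "\<forall>i<n. A i i \<le> 1"
    and l: "is_eigenvalue n A l" and \<mu>: "0 < \<mu>" "\<mu> \<le> l"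
  shows "2/3 \<le> subset_prob n (min 1 (96 / \<mu>))
           (\<lambda>T. \<exists>x. (\<forall>i<n. i \<notin> T \<longrightarrow> x i = 0) \<and> quad_form n A x > 0 \<and>
                  l - \<mu> \<le> quad_form n (mat_mul n A A) x / quad_form n A x)"
    (is "_ \<le> subset_prob n _ ?E")
proof -
  define p where "p = min 1 (96 / \<mu>)"
  have p: "0 < p" "p \<le> 1" using \<mu> by (auto simp: p_def)
  obtain v where v: "(\<Sum>i<n. (v i)\<^sup>2) = 1" "\<forall>i<n. mat_vec n A v i = l * v i"
    using unit_eigenvector_exists[OF l] by blast
  define c where "c T i = of_bool (i \<in> T) - p" for T :: "nat set" and i
  define Z where "Z T = \<mu> * (\<Sum>i<n. c T i * (v i)\<^sup>2)\<^sup>2 + quad_form n A (\<lambda>i. c T i * v i)" for T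
  define M where "M i j = \<mu> * (v i)\<^sup>2 * (v j)\<^sup>2 + v i * A i j * v j" for i j
  define t where "t = \<mu> * p\<^sup>2 / 16"
  have t: "0 < t" using p \<mu> by (simp add: t_def)
  have Markov: "1 - (\<Sum>T\<in>Pow {..<n}. subset_weight n p T * Z T) / t \<le> subset_prob n p ?E"
  proof (rule subset_prob_Markov)
    show "0 \<le> p" "p \<le> 1" "0 < t" using p t by auto
    show "0 \<le> Z T" for T
      using psd \<mu> unfolding Z_def psd_mat_def by (simp add: add_nonneg_nonneg)
    show "?E T" if "Z T \<le> t" for T
      using reweighted_eigenvector_quotient_ge[OF psd v \<mu> p(1), of "\<lambda>i. of_bool (i \<in> T)"] that
      by (intro exI[of _ "\<lambda>i. of_bool (i \<in> T) * v i"]) (simp add: Z_def c_def t_def)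
  qed
  have expectation: "(\<Sum>T\<in>Pow {..<n}. subset_weight n p T * Z T) = p * (1 - p) * (\<Sum>i<n. M i i)"
  proof -
    have "Z T = (\<Sum>i<n. \<Sum>j<n. (of_bool (i \<in> T) - p) * (of_bool (j \<in> T) - p) * M i j)" for T
      unfolding Z_def M_def c_def by (rule centered_quadratic_split[symmetric])
    then show ?thesis by (simp add: sum_subset_weight_centered_quadratic)
  qed
  have trace: "(\<Sum>i<n. M i i) \<le> 2"
    using unit_eigenvector_trace_bound[OF psd diag v \<mu>] by (simp add: M_def power2_eq_square mult_ac)
  have "96 * (1 - p) \<le> \<mu> * p"
    using \<mu> by (cases "96 / \<mu> \<le> 1") (auto simp: p_def)
  then have "p * (96 * (1 - p)) \<le> p * (\<mu> * p)"
    using p by (intro mult_left_mono) auto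
  then have "p * (1 - p) * 2 \<le> t / 3"
    unfolding t_def by (simp add: power2_eq_square algebra_simps)
  moreover have "p * (1 - p) * (\<Sum>i<n. M i i) \<le> p * (1 - p) * 2"
    using trace p by (intro mult_left_mono) auto
  ultimately have "(\<Sum>T\<in>Pow {..<n}. subset_weight n p T * Z T) / t \<le> 1 / 3"
    using expectation t by (simp add: divide_le_eq)
  then show ?thesis
    using Markov unfolding p_def by linarith
qed

lemma subset_prob_lambda_max_restriction:
  assumes n: "n \<ge> 1" and psd: "psd_mat n A" and bound: "\<forall>i<n. \<forall>j<n. \<bar>A i j\<bar> \<le> 1"
    and \<mu>: "0 < \<mu>"
  shows "2/3 \<le> subset_prob n (min 1 (96 / \<mu>))
           (\<lambda>T. lambda_max n A < \<mu> \<or>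
                (\<exists>x. (\<forall>i<n. i \<notin> T \<longrightarrow> x i = 0) \<and> quad_form n A x > 0 \<and>
                   lambda_max n A - \<mu> \<le> quad_form n (mat_mul n A A) x / quad_form n A x))"
proof (cases "lambda_max n A < \<mu>")
  case True
  then show ?thesis by (simp add: subset_prob_eq_1)
next
  case False
  have "is_eigenvalue n A (lambda_max n A)"
    using is_eigenvalue_lambda_max[OF n] psd unfolding psd_mat_def by blast
  moreover have "\<forall>i<n. A i i \<le> 1" using bound by (simp add: abs_le_iff)
  moreover have "0 \<le> min 1 (96 / \<mu>)" "min 1 (96 / \<mu>) \<le> 1" using \<mu> by auto
  ultimately show ?thesis
    using subset_prob_restricted_eigenvector[OF psd _ _ \<mu>] False
    by (force intro: order_trans subset_prob_mono)
qed

theorem mainTheorem5: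
  "\<exists>c::real. c > 0 \<and>
     (\<forall>(n::nat) (\<epsilon>::real) (A::nat \<Rightarrow> nat \<Rightarrow> real).
        n \<ge> 1 \<longrightarrow> 0 < \<epsilon> \<longrightarrow> \<epsilon> < 1 \<longrightarrow> psd_mat n A \<longrightarrow>
        (\<forall>i<n. \<forall>j<n. \<bar>A i j\<bar> \<le> 1) \<longrightarrow>
        subset_prob n (min 1 (c / (\<epsilon> * real n)))
          (\<lambda>T. lambda_max n A < \<epsilon> * real n \<or>
               (\<exists>x::nat \<Rightarrow> real. (\<forall>i<n. i \<notin> T \<longrightarrow> x i = 0) \<and>
                  quad_form n A x > 0 \<and>
                  quad_form n (mat_mul n A A) x / quad_form n A x \<ge> lambda_max n A - \<epsilon> * real n))
        \<ge> 2/3)"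
  by (intro exI[of _ 96] conjI allI impI subset_prob_lambda_max_restriction) auto

end
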